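(* There exists an absolute constant $C>0$ such that the following holds. Let $(p_1,y_1),\ldots,(p_T,y_T)\in[0,1]\times\{0,1\}$ be an arbitrary sequence and let $\mathcal D$ be the uniform distribution over these pairs. Let $m$ be a positive integer. For each $t$, independently round $p_t$ to $p_t'\sim\tau_m(p_t)$, and let $\mathcal D'$ be the uniform distribution over $(p_1',y_1),\ldots,(p_T',y_T)$. Then for every $\delta\in(0,1/(2m))$, with probability at least $1-\delta$, $$|\mathsf{SCDL}_m(\mathcal D')-\mathsf{SCDL}_m(\mathcal D)|\le C\Big(\sqrt{\tfrac{\log(1/\delta)}{T}}+(\log m)\sqrt{\tfrac{m\cdot\mathsf{SCDL}_m(\mathcal D)\log(1/\delta)}{T}}+\tfrac{m(\log m)\log(1/\delta)}{T}\Big).$$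
   Context: For $x\in\mathbb R$ write $x_+=\max\{x,0\}$. For $i\in\{0,\ldots,m\}$ let $w_i(p)=(1-|mp-i|)_+$. The randomized rounding $\tau_m(p)$ is the distribution on $\{0,1/m,\ldots,1\}$ with $\Pr[p'=i/m]=w_i(p)$ (so $\mathbb E[p'\mid p]=p$). For a distribution $\mathcal D$ of $(p,y)\in[0,1]\times\{0,1\}$ let $\pi_i=\mathbb E_{\mathcal D}[w_i(p)]$, $q_i=\mathbb E_{\mathcal D}[w_i(p)y]/\pi_i$ (terms with $\pi_i=0$ are $0$), and $$\mathsf{SCDL}_m(\mathcal D)=\max_{i=0,\ldots,m}\Big(\sum_{j=0}^{i}\pi_j\big(q_j-\tfrac{i+1}{m}\big)_+ +\sum_{j=i+1}^{m}\pi_j\big(\tfrac im-q_j\big)_+\Big).$$ *)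

theory Defs
  imports "HOL-Probability.Probability"
begin

definition wt :: "nat \<Rightarrow> nat \<Rightarrow> real \<Rightarrow> real" where
  "wt m i p = max (1 - \<bar>real m * p - real i\<bar>) 0"

definition tau :: "nat \<Rightarrow> real \<Rightarrow> real pmf" where
  "tau m p = map_pmf (\<lambda>i. real i / real m)
              (embed_pmf (\<lambda>i. if i \<le> m then wt m i p else 0))"

definition piw :: "nat \<Rightarrow> nat \<Rightarrow> (nat \<Rightarrow> real) \<Rightarrow> nat \<Rightarrow> real" where
  "piw m T p i = (\<Sum>t<T. wt m i (p t)) / real T"

definition qw :: "nat \<Rightarrow> nat \<Rightarrow> (nat \<Rightarrow> real) \<Rightarrow> (nat \<Rightarrow> real) \<Rightarrow> nat \<Rightarrow> real" where
  "qw m T p y i = (if piw m T p i = 0 then 0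
                   else ((\<Sum>t<T. wt m i (p t) * y t) / real T) / piw m T p i)"

definition SCDL :: "nat \<Rightarrow> nat \<Rightarrow> (nat \<Rightarrow> real) \<Rightarrow> (nat \<Rightarrow> real) \<Rightarrow> real" where
  "SCDL m T p y = Max ((\<lambda>i.
      (\<Sum>j\<in>{0..i}. piw m T p j * max (qw m T p y j - real (i+1) / real m) 0)
    + (\<Sum>j\<in>{i+1..m}. piw m T p j * max (real i / real m - qw m T p y j) 0)) ` {0..m})"

end

theory Submission
  imports Defs
begin

text \<open>
  Rounding moves every \<open>p\<^sub>t\<close> to a grid point \<open>i / m\<close>, where the hat weight \<open>w\<^sub>j\<close> is the
  indicator of \<open>j = i\<close>, and it is unbiased in the hat basis. So the masses \<open>\<pi>\<^sub>j\<close> and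
  \<open>\<pi>\<^sub>j q\<^sub>j\<close> of the rounded data are sums of independent Bernoulli variables whose means are
  the masses of the original data. A multiplicative Chernoff bound and a union bound over
  these \<open>2 (m + 1)\<close> sums keep each within \<open>2 sqrt (\<mu> L) + 2 L\<close> of its mean \<open>\<mu>\<close>, with
  probability at least \<open>1 - \<delta>\<close> for \<open>L = 3 ln (1 / \<delta>)\<close>.

  On that event the loss moves little. Written in the masses \<open>(\<pi>\<^sub>j q\<^sub>j, \<pi>\<^sub>j)\<close> every term of
  the loss is Lipschitz, so bin \<open>j\<close> moves the loss at threshold \<open>i\<close> by
  \<open>O (sqrt \<pi>\<^sub>j v + v\<^sup>2)\<close> with \<open>v = sqrt (L / T)\<close>. A bin \<open>j < i\<close> whose term is far from
  active changes it only if \<open>\<pi>\<^sub>j\<close> is small, and then by \<open>O (m v\<^sup>2 / (i - j))\<close>; these sum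
  to \<open>O (m H\<^sub>m v\<^sup>2)\<close>. For the remaining near bins, averaging the loss at the thresholds \<open>i - r\<close>
  with weights \<open>1 / r\<close> gives \<open>\<Sum>\<^sub>j \<pi>\<^sub>j (i - j) \<le> 8 m H\<^sub>m SCDL\<close>, and Cauchy-Schwarz turns this
  into a contribution \<open>O (H\<^sub>m v sqrt (m SCDL))\<close>. The right part of the loss reduces to the
  left one by reflection, and \<open>H\<^sub>m \<le> 3 ln m\<close>.
\<close>

section \<open>Hat weights and the rounding distribution\<close>

lemma wt_nonneg: "0 \<le> wt m i p"
  by (simp add: wt_def)

lemma wt_le_1: "wt m i p \<le> 1"
  by (simp add: wt_def)

lemma wt_grid_point:
  assumes "m > 0"
  shows "wt m j (real i / real m) = (if i = j then 1 else 0)"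
proof -
  have "real m * (real i / real m) = real i" using assms by simp
  then show ?thesis unfolding wt_def by (cases "i = j") (auto simp: abs_if)
qed

lemma sum_hat_functions:
  fixes x :: real
  assumes "0 \<le> x"
  shows "(\<Sum>i\<le>n. max (1 - \<bar>x - real i\<bar>) 0) = (if x \<le> real n then 1 else max (1 - (x - real n)) 0)"
  using assms by (induction n) (simp add: abs_if, simp add: abs_if max_def)

lemma sum_wt_eq_1:
  assumes "p \<in> {0..1}"
  shows "(\<Sum>i\<le>m. wt m i p) = 1"
proof -
  have "real m * p \<le> real m" using assms by (simp add: mult_left_le)
  then show ?thesis
    using sum_hat_functions[of "real m * p" m] assms by (simp add: wt_def)
qed

definition tau_mass :: "nat \<Rightarrow> real \<Rightarrow> nat \<Rightarrow> real" where
  "tau_mass m p i = (if i \<le> m then wt m i p else 0)"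

lemma tau_eq_map_embed: "tau m p = map_pmf (\<lambda>i. real i / real m) (embed_pmf (tau_mass m p))"
  by (simp add: tau_def tau_mass_def[abs_def])

lemma pmf_embed_tau_mass:
  assumes "p \<in> {0..1}"
  shows "pmf (embed_pmf (tau_mass m p)) i = tau_mass m p i"
proof (rule pmf_embed_pmf)
  show "0 \<le> tau_mass m p x" for x by (simp add: tau_mass_def wt_nonneg)
  have "(\<integral>\<^sup>+x. ennreal (tau_mass m p x) \<partial>count_space UNIV)
      = (\<integral>\<^sup>+x. ennreal (tau_mass m p x) \<partial>count_space {..m})"
    by (subst nn_integral_count_space_indicator)
       (auto intro!: nn_integral_cong simp: tau_mass_def split: split_indicator)
  also have "\<dots> = ennreal (\<Sum>i\<le>m. tau_mass m p i)"
    by (simp add: nn_integral_count_space_finite tau_mass_def wt_nonneg)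
  also have "(\<Sum>i\<le>m. tau_mass m p i) = 1"
    using sum_wt_eq_1[OF assms] by (simp add: tau_mass_def)
  finally show "(\<integral>\<^sup>+x. ennreal (tau_mass m p x) \<partial>count_space UNIV) = 1" by simp
qed

lemma set_pmf_embed_tau_mass:
  assumes "p \<in> {0..1}"
  shows "set_pmf (embed_pmf (tau_mass m p)) \<subseteq> {..m}"
  using pmf_embed_tau_mass[OF assms] by (auto simp: set_pmf_eq tau_mass_def)

lemma set_pmf_tau:
  assumes "p \<in> {0..1}"
  shows "set_pmf (tau m p) \<subseteq> (\<lambda>i. real i / real m) ` {..m}"
  using set_pmf_embed_tau_mass[OF assms] by (auto simp: tau_eq_map_embed)

lemma finite_set_pmf_tau: "p \<in> {0..1} \<Longrightarrow> finite (set_pmf (tau m p))"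
  using set_pmf_tau by (meson finite_atMost finite_imageI finite_subset)

lemma expectation_tau:
  assumes "p \<in> {0..1}"
  shows "measure_pmf.expectation (tau m p) f = (\<Sum>i\<le>m. wt m i p * f (real i / real m))"
proof -
  have "measure_pmf.expectation (tau m p) f
      = measure_pmf.expectation (embed_pmf (tau_mass m p)) (\<lambda>i. f (real i / real m))"
    by (simp add: tau_eq_map_embed)
  also have "\<dots> = (\<Sum>i\<le>m. pmf (embed_pmf (tau_mass m p)) i *\<^sub>R f (real i / real m))"
    by (rule integral_measure_pmf) (use set_pmf_embed_tau_mass[OF assms] in auto)
  also have "\<dots> = (\<Sum>i\<le>m. wt m i p * f (real i / real m))"
    by (simp add: pmf_embed_tau_mass[OF assms] tau_mass_def)
  finally show ?thesis .
qed

lemma expectation_tau_wt: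
  assumes "p \<in> {0..1}" "m > 0" "j \<le> m"
  shows "measure_pmf.expectation (tau m p) (wt m j) = wt m j p"
  using assms by (simp add: expectation_tau wt_grid_point if_distrib cong: if_cong)

lemma wt_tau_cases:
  assumes "m > 0" "p \<in> {0..1}" "x \<in> set_pmf (tau m p)"
  shows "wt m j x = 0 \<or> wt m j x = 1"
proof -
  obtain i where "x = real i / real m" using set_pmf_tau[OF assms(2)] assms(3) by auto
  then show ?thesis using wt_grid_point[OF assms(1)] by simp
qed

section \<open>A Chernoff bound for independent Bernoulli sums\<close>

lemma exp_minus_le_quadratic:
  fixes x :: real
  assumes "0 \<le> x"
  shows "exp (- x) \<le> 1 - x + x\<^sup>2"
proof -
  have "1 \<le> (1 - x + x\<^sup>2) * (1 + x)"
    using assms by (simp add: algebra_simps power2_eq_square power3_eq_cube)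
  then have "1 / (1 + x) \<le> 1 - x + x\<^sup>2"
    using assms by (simp add: field_simps)
  moreover have "exp (- x) \<le> 1 / (1 + x)"
    using assms by (simp add: exp_minus inverse_eq_divide frac_le)
  ultimately show ?thesis by linarith
qed

lemma prob_Pi_pmf_Bernoulli_sum_ge:
  fixes Q :: "nat \<Rightarrow> 'a pmf" and g :: "nat \<Rightarrow> 'a \<Rightarrow> real"
  assumes fin: "\<And>t. t < T \<Longrightarrow> finite (set_pmf (Q t))"
    and g01: "\<And>t x. t < T \<Longrightarrow> x \<in> set_pmf (Q t) \<Longrightarrow> g t x = 0 \<or> g t x = 1"
    and mu: "\<mu> = (\<Sum>t<T. measure_pmf.expectation (Q t) (g t))"
  shows "measure_pmf.prob (Pi_pmf {..<T} d Q) {x. c \<le> s * (\<Sum>t<T. g t (x t))}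
           \<le> exp ((exp s - 1) * \<mu> - c)"
proof -
  let ?M = "Pi_pmf {..<T} d Q"
  let ?u = "\<lambda>x. \<Prod>t<T. exp (s * g t (x t))"
  have factor: "measure_pmf.expectation (Q t) (\<lambda>v. exp (s * g t v))
      = 1 + (exp s - 1) * measure_pmf.expectation (Q t) (g t)" if t: "t < T" for t
  proof -
    have "measure_pmf.expectation (Q t) (\<lambda>v. exp (s * g t v))
        = measure_pmf.expectation (Q t) (\<lambda>v. 1 + (exp s - 1) * g t v)"
      by (intro integral_cong_AE AE_pmfI) (use g01[OF t] in force)+
    also have "\<dots> = 1 + (exp s - 1) * measure_pmf.expectation (Q t) (g t)"
      by (subst Bochner_Integration.integral_add) (auto intro: integrable_measure_pmf_finite fin t)
    finally show ?thesis .
  qed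
  have "measure_pmf.expectation ?M ?u = (\<Prod>t<T. measure_pmf.expectation (Q t) (\<lambda>v. exp (s * g t v)))"
    by (intro expectation_prod_Pi_pmf integrable_measure_pmf_finite fin) auto
  also have "\<dots> \<le> (\<Prod>t<T. exp ((exp s - 1) * measure_pmf.expectation (Q t) (g t)))"
    by (intro prod_mono conjI integral_nonneg_AE AE_pmfI) (auto simp: factor)
  also have "\<dots> = exp ((exp s - 1) * \<mu>)"
    by (simp add: mu exp_sum sum_distrib_left)
  finally have mgf: "measure_pmf.expectation ?M ?u \<le> exp ((exp s - 1) * \<mu>)" .
  have integrable: "integrable (measure_pmf ?M) ?u"
    by (intro integrable_prod_Pi_pmf integrable_measure_pmf_finite fin) auto
  have "{x. c \<le> s * (\<Sum>t<T. g t (x t))} = {x \<in> space (measure_pmf ?M). exp c \<le> ?u x}"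
    by (auto simp: exp_sum[symmetric] sum_distrib_left)
  then have "measure_pmf.prob ?M {x. c \<le> s * (\<Sum>t<T. g t (x t))} \<le> measure_pmf.expectation ?M ?u / exp c"
    using integral_Markov_inequality_measure[OF integrable, of UNIV "exp c"] by (simp add: prod_nonneg)
  also have "\<dots> \<le> exp ((exp s - 1) * \<mu>) / exp c"
    by (intro divide_right_mono mgf) simp
  finally show ?thesis by (simp add: exp_diff)
qed

definition chernoff_radius :: "real \<Rightarrow> real \<Rightarrow> real" where
  "chernoff_radius \<mu> L = 2 * sqrt (\<mu> * L) + 2 * L"

lemma chernoff_radius_nonneg: "0 \<le> \<mu> \<Longrightarrow> 0 \<le> L \<Longrightarrow> 0 \<le> chernoff_radius \<mu> L"
  by (simp add: chernoff_radius_def)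

lemma chernoff_radius_mono: "\<mu> \<le> \<mu>' \<Longrightarrow> 0 \<le> L \<Longrightarrow> chernoff_radius \<mu> L \<le> chernoff_radius \<mu>' L"
  by (simp add: chernoff_radius_def mult_right_mono)

lemma chernoff_radius_sq:
  "0 \<le> v \<Longrightarrow> chernoff_radius \<mu> (v\<^sup>2) = 2 * sqrt \<mu> * v + 2 * v\<^sup>2"
  by (simp add: chernoff_radius_def real_sqrt_mult)

lemma chernoff_radius_divide:
  "0 < T \<Longrightarrow> chernoff_radius (\<mu> / T) (L / T) = chernoff_radius \<mu> L / T"
  by (simp add: chernoff_radius_def real_sqrt_divide real_sqrt_mult add_divide_distrib
      power2_eq_square[symmetric])

text \<open>Since \<open>exp r - 1 \<le> r + r\<^sup>2\<close> and \<open>exp (- r) - 1 \<le> - r + r\<^sup>2\<close> for \<open>0 \<le> r \<le> 1\<close>,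
  such a rate bounds the exponential moment of either tail by \<open>exp (- L)\<close>.\<close>

lemma chernoff_rate_exists:
  fixes \<mu> L :: real
  assumes "0 \<le> \<mu>" "0 < L"
  obtains r where "0 < r" "r \<le> 1" "r\<^sup>2 * \<mu> - r * chernoff_radius \<mu> L \<le> - L"
proof (cases "\<mu> \<le> L")
  case True
  have "0 \<le> sqrt (\<mu> * L)" using assms by simp
  then have "\<mu> - chernoff_radius \<mu> L \<le> - L"
    using True unfolding chernoff_radius_def by linarith
  then show ?thesis using that[of 1] by simp
next
  case False
  define r where "r = sqrt (L / \<mu>)"
  have "r\<^sup>2 * \<mu> = L" "r * sqrt (\<mu> * L) = L"
    using False assms by (simp_all add: r_def real_sqrt_mult[symmetric])
  then have "r\<^sup>2 * \<mu> - r * chernoff_radius \<mu> L = - L - 2 * (r * L)"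
    by (simp add: chernoff_radius_def algebra_simps)
  moreover have "0 < r" "r \<le> 1" using False assms by (auto simp: r_def)
  ultimately show ?thesis
    using that[of r] assms by (simp add: mult_nonneg_nonneg)
qed

lemma prob_Pi_pmf_Bernoulli_sum_deviation:
  fixes Q :: "nat \<Rightarrow> 'a pmf" and g :: "nat \<Rightarrow> 'a \<Rightarrow> real"
  assumes fin: "\<And>t. t < T \<Longrightarrow> finite (set_pmf (Q t))"
    and g01: "\<And>t x. t < T \<Longrightarrow> x \<in> set_pmf (Q t) \<Longrightarrow> g t x = 0 \<or> g t x = 1"
    and mu: "\<mu> = (\<Sum>t<T. measure_pmf.expectation (Q t) (g t))"
    and L: "0 < L"
  shows "measure_pmf.prob (Pi_pmf {..<T} d Q)
           {x. chernoff_radius \<mu> L \<le> \<bar>(\<Sum>t<T. g t (x t)) - \<mu>\<bar>} \<le> 2 * exp (- L)"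
proof -
  let ?M = "Pi_pmf {..<T} d Q" and ?a = "chernoff_radius \<mu> L" and ?X = "\<lambda>x. \<Sum>t<T. g t (x t)"
  have "0 \<le> \<mu>"
    unfolding mu by (intro sum_nonneg integral_nonneg_AE AE_pmfI) (use g01 in force)
  then obtain r where r: "0 < r" "r \<le> 1" "r\<^sup>2 * \<mu> - r * ?a \<le> - L"
    using chernoff_rate_exists L by blast
  have "measure_pmf.prob ?M {x. \<mu> + ?a \<le> ?X x} \<le> measure_pmf.prob ?M {x. r * (\<mu> + ?a) \<le> r * ?X x}"
    using r by (intro measure_pmf.finite_measure_mono) auto
  also have "\<dots> \<le> exp ((exp r - 1) * \<mu> - r * (\<mu> + ?a))"
    by (rule prob_Pi_pmf_Bernoulli_sum_ge[OF fin g01 mu])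
  also have "\<dots> \<le> exp (- L)"
  proof -
    have "exp r - 1 \<le> r + r\<^sup>2" using exp_bound[of r] r by simp
    then have "(exp r - 1) * \<mu> \<le> (r + r\<^sup>2) * \<mu>" using \<open>0 \<le> \<mu>\<close> by (intro mult_right_mono)
    then show ?thesis using r by (simp add: algebra_simps)
  qed
  finally have upper: "measure_pmf.prob ?M {x. \<mu> + ?a \<le> ?X x} \<le> exp (- L)" .
  have "measure_pmf.prob ?M {x. ?X x \<le> \<mu> - ?a} \<le> measure_pmf.prob ?M {x. (- r) * (\<mu> - ?a) \<le> (- r) * ?X x}"
    using r by (intro measure_pmf.finite_measure_mono) auto
  also have "\<dots> \<le> exp ((exp (- r) - 1) * \<mu> - (- r) * (\<mu> - ?a))"
    by (rule prob_Pi_pmf_Bernoulli_sum_ge[OF fin g01 mu])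
  also have "\<dots> \<le> exp (- L)"
  proof -
    have "exp (- r) - 1 \<le> - r + r\<^sup>2" using exp_minus_le_quadratic[of r] r by simp
    then have "(exp (- r) - 1) * \<mu> \<le> (- r + r\<^sup>2) * \<mu>" using \<open>0 \<le> \<mu>\<close> by (intro mult_right_mono)
    then show ?thesis using r by (simp add: algebra_simps)
  qed
  finally have lower: "measure_pmf.prob ?M {x. ?X x \<le> \<mu> - ?a} \<le> exp (- L)" .
  have "{x. ?a \<le> \<bar>?X x - \<mu>\<bar>} = {x. \<mu> + ?a \<le> ?X x} \<union> {x. ?X x \<le> \<mu> - ?a}"
    by auto
  then have "measure_pmf.prob ?M {x. ?a \<le> \<bar>?X x - \<mu>\<bar>}
      \<le> measure_pmf.prob ?M {x. \<mu> + ?a \<le> ?X x} + measure_pmf.prob ?M {x. ?X x \<le> \<mu> - ?a}"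
    by (simp add: measure_Un_le)
  then show ?thesis using upper lower by simp
qed

section \<open>The loss as a function of the bin masses\<close>

definition bin_mass :: "nat \<Rightarrow> nat \<Rightarrow> (nat \<Rightarrow> real) \<Rightarrow> (nat \<Rightarrow> real) \<Rightarrow> nat \<Rightarrow> real" where
  "bin_mass m T w x j = (\<Sum>t<T. w t * wt m j (x t))"

definition piyw :: "nat \<Rightarrow> nat \<Rightarrow> (nat \<Rightarrow> real) \<Rightarrow> (nat \<Rightarrow> real) \<Rightarrow> nat \<Rightarrow> real" where
  "piyw m T p y j = bin_mass m T y p j / real T"

text \<open>In terms of \<open>A j = \<pi>\<^sub>j q\<^sub>j\<close> and \<open>B j = \<pi>\<^sub>j\<close> the terms of the loss no longer
  involve the ratio \<open>q\<^sub>j\<close>, which makes them Lipschitz in \<open>(A j, B j)\<close>.\<close>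

definition scdl_left :: "nat \<Rightarrow> nat \<Rightarrow> (nat \<Rightarrow> real) \<Rightarrow> (nat \<Rightarrow> real) \<Rightarrow> real" where
  "scdl_left m i A B = (\<Sum>j\<in>{0..i}. max (A j - real (i + 1) / real m * B j) 0)"

definition scdl_right :: "nat \<Rightarrow> nat \<Rightarrow> (nat \<Rightarrow> real) \<Rightarrow> (nat \<Rightarrow> real) \<Rightarrow> real" where
  "scdl_right m i A B = (\<Sum>j\<in>{i + 1..m}. max (real i / real m * B j - A j) 0)"

definition scdl_at :: "nat \<Rightarrow> nat \<Rightarrow> (nat \<Rightarrow> real) \<Rightarrow> (nat \<Rightarrow> real) \<Rightarrow> real" where
  "scdl_at m i A B = scdl_left m i A B + scdl_right m i A B"

lemma scdl_left_nonneg: "0 \<le> scdl_left m i A B"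
  unfolding scdl_left_def by (intro sum_nonneg) auto

lemma scdl_right_nonneg: "0 \<le> scdl_right m i A B"
  unfolding scdl_right_def by (intro sum_nonneg) auto

lemma piw_eq_bin_mass: "piw m T p j = bin_mass m T (\<lambda>_. 1) p j / real T"
  by (simp add: piw_def bin_mass_def)

lemma piw_nonneg: "0 \<le> piw m T p j"
  unfolding piw_def by (intro divide_nonneg_nonneg sum_nonneg) (auto simp: wt_nonneg)

lemma piw_le_1: "piw m T p j \<le> 1"
proof -
  have "(\<Sum>t<T. wt m j (p t)) \<le> real T"
    using sum_mono[of "{..<T}" "\<lambda>t. wt m j (p t)" "\<lambda>_. 1"] by (simp add: wt_le_1)
  then show ?thesis unfolding piw_def by (cases "T = 0") (auto simp: field_simps)
qed

lemma bin_mass_nonneg: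
  assumes "\<forall>t<T. w t \<in> {0,1}"
  shows "0 \<le> bin_mass m T w x j"
  unfolding bin_mass_def using assms by (intro sum_nonneg) (auto simp: wt_nonneg)

lemma bin_mass_le_bin_mass_1:
  assumes "\<forall>t<T. w t \<in> {0,1}"
  shows "bin_mass m T w x j \<le> bin_mass m T (\<lambda>_. 1) x j"
  unfolding bin_mass_def using assms by (intro sum_mono) (auto simp: wt_nonneg)

lemma piyw_nonneg: "\<forall>t<T. y t \<in> {0,1} \<Longrightarrow> 0 \<le> piyw m T p y j"
  by (simp add: piyw_def bin_mass_nonneg)

lemma piyw_le_piw: "\<forall>t<T. y t \<in> {0,1} \<Longrightarrow> piyw m T p y j \<le> piw m T p j"
  by (simp add: piyw_def piw_eq_bin_mass divide_right_mono bin_mass_le_bin_mass_1)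

lemma mult_max_ratio_eq:
  fixes a b c :: real
  assumes "0 \<le> a" "a \<le> b"
  shows "b * max ((if b = 0 then 0 else a / b) - c) 0 = max (a - c * b) 0"
    and "b * max (c - (if b = 0 then 0 else a / b)) 0 = max (c * b - a) 0"
proof -
  have "b * max x 0 = max (b * x) 0" for x using assms by (simp add: max_mult_distrib_left)
  then show "b * max ((if b = 0 then 0 else a / b) - c) 0 = max (a - c * b) 0"
    and "b * max (c - (if b = 0 then 0 else a / b)) 0 = max (c * b - a) 0"
    using assms by (auto simp: field_simps)
qed

lemma SCDL_eq_Max_scdl_at:
  assumes "\<forall>t<T. y t \<in> {0,1}"
  shows "SCDL m T p y = Max ((\<lambda>i. scdl_at m i (piyw m T p y) (piw m T p)) ` {0..m})"
proof -
  have qw: "qw m T p y j = (if piw m T p j = 0 then 0 else piyw m T p y j / piw m T p j)" for j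
    by (simp add: qw_def piyw_def bin_mass_def mult.commute)
  show ?thesis
    unfolding SCDL_def scdl_at_def scdl_left_def scdl_right_def qw
    using mult_max_ratio_eq[OF piyw_nonneg[OF assms] piyw_le_piw[OF assms]] by simp
qed

lemma scdl_at_le_SCDL:
  assumes "\<forall>t<T. y t \<in> {0,1}" "i \<le> m"
  shows "scdl_at m i (piyw m T p y) (piw m T p) \<le> SCDL m T p y"
  unfolding SCDL_eq_Max_scdl_at[OF assms(1)] using assms(2) by (intro Max_ge) auto

lemma SCDL_nonneg:
  assumes "\<forall>t<T. y t \<in> {0,1}"
  shows "0 \<le> SCDL m T p y"
proof -
  have "0 \<le> scdl_at m 0 (piyw m T p y) (piw m T p)"
    by (simp add: scdl_at_def scdl_left_nonneg scdl_right_nonneg)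
  also have "\<dots> \<le> SCDL m T p y"
    using assms by (rule scdl_at_le_SCDL) simp
  finally show ?thesis .
qed

lemma scdl_at_1_eq_0:
  assumes "\<And>j. 0 \<le> A j" "\<And>j. A j \<le> B j" "i \<le> 1"
  shows "scdl_at 1 i A B = 0"
proof -
  have "max (A j - c * B j) 0 = 0" if "1 \<le> c" for j c
  proof -
    have "0 \<le> B j" using order.trans[OF assms(1,2)] .
    then have "B j \<le> c * B j"
      using that by (simp add: mult_le_cancel_right1)
    then show ?thesis using assms(2)[of j] by simp
  qed
  from this[of 1] this[of 2] assms(1) have zero_terms:
    "max (A j - B j) 0 = 0" "max (A j - 2 * B j) 0 = 0" "max (- A j) 0 = 0" for j
    by auto
  from assms(3) consider "i = 0" | "i = 1" by linarith
  then show ?thesis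
    by cases (simp_all add: scdl_at_def scdl_left_def scdl_right_def zero_terms)
qed

lemma SCDL_1_eq_0:
  assumes "\<forall>t<T. y t \<in> {0,1}"
  shows "SCDL 1 T p y = 0"
proof -
  have "(\<lambda>i. scdl_at 1 i (piyw 1 T p y) (piw 1 T p)) ` {0..1} = {0}"
    using scdl_at_1_eq_0[OF piyw_nonneg[OF assms] piyw_le_piw[OF assms]] by auto
  then show ?thesis by (simp add: SCDL_eq_Max_scdl_at[OF assms])
qed

section \<open>Harmonic sums\<close>

lemma sum_inverse_distance_eq_harm: "(\<Sum>j<i. 1 / real (i - j)) = harm i"
  unfolding harm_def
  by (rule sum.reindex_bij_witness[of _ "\<lambda>k. i - k" "\<lambda>j. i - j"]) (auto simp: inverse_eq_divide)

lemma one_le_harm: "1 \<le> m \<Longrightarrow> 1 \<le> (harm m :: real)"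
  using harm_mono[of 1 m] by (simp add: harm_def)

lemma harm_le_3_ln:
  assumes "2 \<le> m"
  shows "harm m \<le> 3 * ln (real m)"
proof -
  have "harm m - ln (real m) \<le> harm 1 - ln (real (1::nat))"
    by (rule euler_mascheroni_sequence_decreasing) (use assms in auto)
  then have "harm m \<le> 1 + ln (real m)" by (simp add: harm_def)
  moreover have "ln 2 \<le> ln (real m)" using assms by simp
  ultimately show ?thesis using ln2_ge_two_thirds by linarith
qed

lemma sum_inverse_upper_half_ge:
  assumes "1 \<le> k" "k \<le> i"
  shows "1 / 2 \<le> (\<Sum>r\<in>{1..i}. if k \<le> 2 * r \<and> r \<le> k then 1 / real r else 0)"
proof -
  have "{r \<in> {1..i}. k \<le> 2 * r \<and> r \<le> k} = {(k + 1) div 2..k}"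
    using assms by auto
  then have "(\<Sum>r\<in>{1..i}. if k \<le> 2 * r \<and> r \<le> k then 1 / real r else 0)
      = (\<Sum>r\<in>{(k + 1) div 2..k}. 1 / real r)"
    by (simp add: sum.inter_filter[symmetric])
  also have "\<dots> \<ge> (\<Sum>r\<in>{(k + 1) div 2..k}. 1 / real k)"
    using assms by (intro sum_mono) (auto intro!: divide_left_mono)
  also have "(\<Sum>r\<in>{(k + 1) div 2..k}. 1 / real k) = real (k + 1 - (k + 1) div 2) / real k"
    by simp
  also have "\<dots> \<ge> 1 / 2"
  proof -
    have "real k \<le> 2 * real (k + 1 - (k + 1) div 2)" by linarith
    then show ?thesis using assms by (simp add: field_simps)
  qed
  finally show ?thesis .
qed

section \<open>Perturbation of the loss\<close>

text \<open>A far bin changes its term only if its mass is small, and the mass of the near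
  bins is controlled by the loss at the thresholds \<open>i - r\<close>, \<open>(i - j) / 2 \<le> r \<le> i - j\<close>.\<close>

definition near_bins :: "nat \<Rightarrow> nat \<Rightarrow> (nat \<Rightarrow> real) \<Rightarrow> (nat \<Rightarrow> real) \<Rightarrow> nat set" where
  "near_bins m i A B =
     {j. j < i \<and> - (real (i - j) * B j / (4 * real m)) \<le> A j - real (i + 1) / real m * B j}"

lemma near_bins_subset: "near_bins m i A B \<subseteq> {..<i}"
  by (auto simp: near_bins_def)

lemma near_bins_le_scdl_left:
  assumes r: "r \<in> {1..i}" and m: "0 < m" and B: "\<And>j. j < i \<Longrightarrow> 0 \<le> B j"
  shows "(\<Sum>j\<in>near_bins m i A B.
            if i - j \<le> 2 * r \<and> r \<le> i - j then B j * real (i - j) / (4 * real m) else 0)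
         \<le> scdl_left m (i - r) A B"
proof -
  let ?g = "\<lambda>j. if j \<le> i - r then max (A j - real (i - r + 1) / real m * B j) 0 else 0"
  have "(if i - j \<le> 2 * r \<and> r \<le> i - j then B j * real (i - j) / (4 * real m) else 0) \<le> ?g j"
    if j: "j \<in> near_bins m i A B" for j
  proof (cases "i - j \<le> 2 * r \<and> r \<le> i - j")
    case True
    have ji: "j < i" and near: "- (real (i - j) * B j / (4 * real m)) \<le> A j - real (i + 1) / real m * B j"
      using j by (auto simp: near_bins_def)
    have shift: "A j - real (i - r + 1) / real m * B j = (A j - real (i + 1) / real m * B j) + real r * B j / real m"
      using r by (simp add: of_nat_diff diff_divide_distrib add_divide_distrib left_diff_distrib algebra_simps)
    have "B j * real (i - j) \<le> B j * (2 * real r)"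
      using True B[OF ji] by (intro mult_left_mono) (auto simp flip: of_nat_mult)
    then have "B j * real (i - j) / (4 * real m) + B j * real (i - j) / (4 * real m) \<le> real r * B j / real m"
      using m by (simp add: field_simps)
    then have "B j * real (i - j) / (4 * real m) \<le> A j - real (i - r + 1) / real m * B j"
      using near shift by (simp add: mult.commute)
    moreover have "j \<le> i - r" using True ji by auto
    ultimately show ?thesis using True by simp
  next
    case False
    then show ?thesis by (simp only: if_False) simp
  qed
  then have "(\<Sum>j\<in>near_bins m i A B.
        if i - j \<le> 2 * r \<and> r \<le> i - j then B j * real (i - j) / (4 * real m) else 0)
      \<le> (\<Sum>j\<in>near_bins m i A B. ?g j)"
    by (rule sum_mono)
  also have "\<dots> \<le> (\<Sum>j<i. ?g j)"
    using near_bins_subset by (intro sum_mono2) auto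
  also have "\<dots> = scdl_left m (i - r) A B"
  proof -
    have "{j \<in> {..<i}. j \<le> i - r} = {0..i - r}" using r by auto
    then show ?thesis by (simp add: sum.inter_filter[symmetric] scdl_left_def)
  qed
  finally show ?thesis .
qed

lemma near_bins_weighted_mass_le:
  assumes m: "1 \<le> m" "i \<le> m"
    and B: "\<And>j. j < i \<Longrightarrow> 0 \<le> B j"
    and loss: "\<And>r. r \<le> i \<Longrightarrow> scdl_left m r A B \<le> S"
  shows "(\<Sum>j\<in>near_bins m i A B. B j * real (i - j)) \<le> 8 * real m * harm m * S"
proof -
  let ?N = "near_bins m i A B"
  define f where "f r j = (if i - j \<le> 2 * r \<and> r \<le> i - j then B j * real (i - j) / (4 * real m) else 0)"
    for r j
  have S: "0 \<le> S" using loss[of 0] scdl_left_nonneg[of m 0 A B] by simp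
  have "(\<Sum>j\<in>?N. B j * real (i - j) / (4 * real m) * (1 / 2))
      \<le> (\<Sum>j\<in>?N. B j * real (i - j) / (4 * real m) *
            (\<Sum>r\<in>{1..i}. if i - j \<le> 2 * r \<and> r \<le> i - j then 1 / real r else 0))"
  proof (intro sum_mono mult_left_mono)
    fix j assume "j \<in> ?N"
    then have "j < i" using near_bins_subset[of m i A B] by auto
    then show "1 / 2 \<le> (\<Sum>r\<in>{1..i}. if i - j \<le> 2 * r \<and> r \<le> i - j then 1 / real r else 0)"
      by (intro sum_inverse_upper_half_ge) auto
    show "0 \<le> B j * real (i - j) / (4 * real m)" using B[OF \<open>j < i\<close>] by simp
  qed
  also have "\<dots> = (\<Sum>j\<in>?N. \<Sum>r\<in>{1..i}. 1 / real r * f r j)"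
    by (simp add: sum_distrib_left f_def if_distrib mult.commute cong: if_cong)
  also have "\<dots> = (\<Sum>r\<in>{1..i}. 1 / real r * (\<Sum>j\<in>?N. f r j))"
    by (simp add: sum_distrib_left) (rule sum.swap)
  also have "\<dots> \<le> (\<Sum>r\<in>{1..i}. 1 / real r * S)"
  proof (intro sum_mono mult_left_mono)
    fix r assume r: "r \<in> {1..i}"
    have "(\<Sum>j\<in>?N. f r j) \<le> scdl_left m (i - r) A B"
      unfolding f_def using r m B by (intro near_bins_le_scdl_left) auto
    also have "\<dots> \<le> S" by (rule loss) simp
    finally show "(\<Sum>j\<in>?N. f r j) \<le> S" .
  qed simp
  also have "\<dots> = harm i * S"
    by (simp add: harm_def sum_distrib_right inverse_eq_divide)
  also have "\<dots> \<le> harm m * S"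
    using harm_mono[OF m(2)] S by (intro mult_right_mono)
  finally have "(\<Sum>j\<in>?N. B j * real (i - j)) / (8 * real m) \<le> harm m * S"
    by (simp add: sum_divide_distrib)
  then show ?thesis using m by (simp add: field_simps)
qed

lemma near_bins_sqrt_mass_le:
  assumes m: "1 \<le> m" "i \<le> m"
    and B: "\<And>j. j < i \<Longrightarrow> 0 \<le> B j"
    and loss: "\<And>r. r \<le> i \<Longrightarrow> scdl_left m r A B \<le> S"
  shows "(\<Sum>j\<in>near_bins m i A B. sqrt (B j)) \<le> 3 * harm m * sqrt (real m * S)"
proof -
  let ?N = "near_bins m i A B"
  have S: "0 \<le> S" using loss[of 0] scdl_left_nonneg[of m 0 A B] by simp
  have N: "j < i" if "j \<in> ?N" for j using that near_bins_subset[of m i A B] by auto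
  have "(\<Sum>j\<in>?N. sqrt (B j)) = (\<Sum>j\<in>?N. sqrt (B j * real (i - j)) * sqrt (1 / real (i - j)))"
    by (intro sum.cong) (auto simp: real_sqrt_mult[symmetric] dest!: N)
  then have "(\<Sum>j\<in>?N. sqrt (B j))\<^sup>2 = (\<Sum>j\<in>?N. sqrt (B j * real (i - j)) * sqrt (1 / real (i - j)))\<^sup>2"
    by simp
  also have "\<dots> \<le> (\<Sum>j\<in>?N. (sqrt (B j * real (i - j)))\<^sup>2) * (\<Sum>j\<in>?N. (sqrt (1 / real (i - j)))\<^sup>2)"
    by (rule Cauchy_Schwarz_ineq_sum)
  also have "\<dots> = (\<Sum>j\<in>?N. B j * real (i - j)) * (\<Sum>j\<in>?N. 1 / real (i - j))"
    using N B by (intro arg_cong2[where f = "(*)"] sum.cong) auto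
  also have "\<dots> \<le> (8 * real m * harm m * S) * harm m"
  proof (rule mult_mono)
    show "(\<Sum>j\<in>?N. B j * real (i - j)) \<le> 8 * real m * harm m * S"
      using near_bins_weighted_mass_le[OF m B loss] by blast
    have "(\<Sum>j\<in>?N. 1 / real (i - j)) \<le> (\<Sum>j<i. 1 / real (i - j))"
      using near_bins_subset by (intro sum_mono2) auto
    also have "\<dots> = harm i" by (rule sum_inverse_distance_eq_harm)
    also have "\<dots> \<le> harm m" by (rule harm_mono[OF m(2)])
    finally show "(\<Sum>j\<in>?N. 1 / real (i - j)) \<le> harm m" .
    show "0 \<le> 8 * real m * harm m * S" using S harm_nonneg[of m] by (intro mult_nonneg_nonneg) auto
    show "0 \<le> (\<Sum>j\<in>?N. 1 / real (i - j))" by (intro sum_nonneg) simp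
  qed
  also have "\<dots> = 8 * ((harm m)\<^sup>2 * (real m * S))"
    by (simp add: power2_eq_square algebra_simps)
  also have "\<dots> \<le> 9 * ((harm m)\<^sup>2 * (real m * S))"
    using mult_nonneg_nonneg[OF zero_le_power2[of "harm m"] mult_nonneg_nonneg[OF of_nat_0_le_iff[of m] S]]
    by linarith
  also have "\<dots> = (3 * harm m * sqrt (real m * S))\<^sup>2"
    unfolding power_mult_distrib real_sqrt_pow2[OF mult_nonneg_nonneg[OF of_nat_0_le_iff S]] by simp
  finally show ?thesis
    by (rule power2_le_imp_le) (use S harm_nonneg[of m] in \<open>intro mult_nonneg_nonneg real_sqrt_ge_zero; simp\<close>)
qed

lemma left_term_diff_le:
  fixes c e A B A' B' :: real
  assumes "0 \<le> c" "c \<le> 2" "\<bar>A' - A\<bar> \<le> 2 * e" "\<bar>B' - B\<bar> \<le> e"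
  shows "\<bar>(A' - c * B') - (A - c * B)\<bar> \<le> 4 * e"
proof -
  have "\<bar>c * (B' - B)\<bar> \<le> 2 * e"
    using assms by (simp add: abs_mult) (metis abs_ge_zero mult_mono order.trans)
  then show ?thesis using assms(3) by (simp add: abs_le_iff algebra_simps)
qed

lemma quadratic_lt_imp_le_inverse:
  fixes a u v :: real
  assumes a: "0 < a" "a \<le> 1" and uv: "0 \<le> u" "0 \<le> v" and lt: "a * u\<^sup>2 < 8 * u * v + 8 * v\<^sup>2"
  shows "8 * u * v + 8 * v\<^sup>2 \<le> 80 * v\<^sup>2 / a"
proof -
  have u: "a * u \<le> 9 * v"
  proof (rule ccontr)
    assume "\<not> a * u \<le> 9 * v"
    then have "9 * v < a * u" "a * u \<le> u" using a uv by (auto intro: mult_left_le_one_le)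
    then have "9 * v * u < a * u * u" "9 * v * v \<le> u * v" using uv
      by (auto intro!: mult_strict_right_mono mult_right_mono)
    then have "9 * (u * v) < a * u\<^sup>2" "9 * v\<^sup>2 \<le> u * v"
      by (simp_all add: power2_eq_square algebra_simps)
    moreover have "0 \<le> v\<^sup>2" by simp
    ultimately show False using lt by linarith
  qed
  have "8 * u * v * a \<le> 72 * v\<^sup>2"
    using mult_right_mono[OF u uv(2)] by (simp add: power2_eq_square algebra_simps)
  moreover have "8 * v\<^sup>2 * a \<le> 8 * v\<^sup>2" using a by (simp add: mult_left_le)
  ultimately show ?thesis using a by (simp add: field_simps)
qed

lemma far_term_perturb:
  fixes a c v A B A' B' :: real
  assumes c: "0 \<le> c" "c \<le> 2" and a: "0 < a" "a \<le> 1" and B: "0 \<le> B" and v: "0 \<le> v"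
    and far: "A - c * B < - (a * B)"
    and dA: "\<bar>A' - A\<bar> \<le> 2 * chernoff_radius B (v\<^sup>2)" and dB: "\<bar>B' - B\<bar> \<le> chernoff_radius B (v\<^sup>2)"
  shows "\<bar>max (A' - c * B') 0 - max (A - c * B) 0\<bar> \<le> 80 * v\<^sup>2 / a"
proof -
  let ?e = "chernoff_radius B (v\<^sup>2)"
  have diff: "\<bar>(A' - c * B') - (A - c * B)\<bar> \<le> 4 * ?e"
    by (rule left_term_diff_le[OF c dA dB])
  show ?thesis
  proof (cases "A - c * B \<le> - 4 * ?e")
    case True
    then show ?thesis using diff a by simp
  next
    case False
    then have "a * (sqrt B)\<^sup>2 < 8 * sqrt B * v + 8 * v\<^sup>2"
      using far B chernoff_radius_sq[OF v, of B] by simp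
    then have "8 * sqrt B * v + 8 * v\<^sup>2 \<le> 80 * v\<^sup>2 / a"
      by (rule quadratic_lt_imp_le_inverse[OF a real_sqrt_ge_zero[OF B] v])
    then have "4 * ?e \<le> 80 * v\<^sup>2 / a"
      using chernoff_radius_sq[OF v, of B] by simp
    then show ?thesis using diff by linarith
  qed
qed

lemma left_term_perturb_le:
  fixes c v A B A' B' :: real
  assumes c: "0 \<le> c" "c \<le> 2" and v: "0 \<le> v"
    and dA: "\<bar>A' - A\<bar> \<le> 2 * chernoff_radius B (v\<^sup>2)" and dB: "\<bar>B' - B\<bar> \<le> chernoff_radius B (v\<^sup>2)"
  shows "\<bar>max (A' - c * B') 0 - max (A - c * B) 0\<bar> \<le> 8 * v * sqrt B + 8 * v\<^sup>2"
proof -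
  have "\<bar>max (A' - c * B') 0 - max (A - c * B) 0\<bar> \<le> 4 * chernoff_radius B (v\<^sup>2)"
    using left_term_diff_le[OF c dA dB] by linarith
  also have "\<dots> = 8 * v * sqrt B + 8 * v\<^sup>2"
    by (simp add: chernoff_radius_sq[OF v] algebra_simps)
  finally show ?thesis .
qed

lemma scdl_left_bin_perturb:
  assumes m: "1 \<le> m" "i \<le> m" and j: "j < i" and v: "0 \<le> v" and B: "0 \<le> B j"
    and dA: "\<bar>A' j - A j\<bar> \<le> 2 * chernoff_radius (B j) (v\<^sup>2)"
    and dB: "\<bar>B' j - B j\<bar> \<le> chernoff_radius (B j) (v\<^sup>2)"
  shows "\<bar>max (A' j - real (i + 1) / real m * B' j) 0 - max (A j - real (i + 1) / real m * B j) 0\<bar>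
           \<le> 320 * real m * v\<^sup>2 / real (i - j) + 8 * v\<^sup>2
             + (if j \<in> near_bins m i A B then 8 * v * sqrt (B j) else 0)"
    (is "?D \<le> _")
proof -
  have c: "0 \<le> real (i + 1) / real m" "real (i + 1) / real m \<le> 2"
    using m by (auto simp: field_simps)
  show ?thesis
  proof (cases "j \<in> near_bins m i A B")
    case True
    have "?D \<le> 8 * v\<^sup>2 + 8 * v * sqrt (B j)"
      using left_term_perturb_le[OF c v dA dB] by (simp only: add.commute)
    then show ?thesis
      unfolding if_P[OF True] add.assoc by (rule add_increasing[rotated]) simp
  next
    case False
    let ?a = "real (i - j) / (4 * real m)"
    have "?D \<le> 80 * v\<^sup>2 / ?a"
    proof (rule far_term_perturb[OF c _ _ B v _ dA dB])
      show "0 < ?a" "?a \<le> 1" using j m by (auto simp: field_simps)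
      show "A j - real (i + 1) / real m * B j < - (?a * B j)" using False j by (auto simp: near_bins_def)
    qed
    also have "80 * v\<^sup>2 / ?a = 320 * real m * v\<^sup>2 / real (i - j)"
      using j m by (simp add: field_simps)
    finally have "?D \<le> 320 * real m * v\<^sup>2 / real (i - j) + 8 * v\<^sup>2"
      by (rule add_increasing2[rotated]) simp
    then show ?thesis using False by simp
  qed
qed

lemma left_perturb_total_le:
  fixes v S s :: real
  assumes m: "1 \<le> m" "i \<le> m" and v: "0 \<le> v" and S: "0 \<le> S"
    and s: "s \<le> 3 * harm m * sqrt (real m * S)"
  shows "8 * v + 8 * v\<^sup>2 + 320 * real m * v\<^sup>2 * harm i + 8 * real i * v\<^sup>2 + 8 * v * s
           \<le> 336 * (v + harm m * v * sqrt (real m * S) + real m * harm m * v\<^sup>2)"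
proof -
  let ?H = "harm m :: real"
  have H: "1 \<le> ?H" "harm i \<le> ?H" using one_le_harm harm_mono m by auto
  have mH: "1 \<le> real m * ?H" using H m mult_mono[of 1 "real m" 1 ?H] by simp
  have "8 * v\<^sup>2 \<le> 8 * (real m * ?H * v\<^sup>2)"
    using mult_right_mono[OF mH, of "v\<^sup>2"] by simp
  moreover have "320 * real m * v\<^sup>2 * harm i \<le> 320 * (real m * ?H * v\<^sup>2)"
    using mult_left_mono[OF H(2), of "real m * v\<^sup>2"] by (simp add: algebra_simps)
  moreover have "real i \<le> real m * ?H"
    using m(2) mult_left_mono[OF H(1), of "real m"] by (simp add: of_nat_le_iff[symmetric] del: of_nat_le_iff)
  then have "8 * real i * v\<^sup>2 \<le> 8 * (real m * ?H * v\<^sup>2)"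
    using mult_right_mono[of "real i" "real m * ?H" "v\<^sup>2"] by simp
  moreover have "8 * v * s \<le> 24 * (?H * v * sqrt (real m * S))"
    using mult_left_mono[OF s v] by (simp add: algebra_simps)
  moreover have "0 \<le> ?H * v * sqrt (real m * S)"
    using harm_nonneg[of m] v S by (intro mult_nonneg_nonneg real_sqrt_ge_zero) auto
  ultimately show ?thesis unfolding distrib_left using v by linarith
qed

lemma scdl_left_perturb:
  assumes m: "1 \<le> m" "i \<le> m" and v: "0 \<le> v"
    and B: "\<And>j. j \<le> i \<Longrightarrow> 0 \<le> B j \<and> B j \<le> 1"
    and dA: "\<And>j. j \<le> i \<Longrightarrow> \<bar>A' j - A j\<bar> \<le> 2 * chernoff_radius (B j) (v\<^sup>2)"
    and dB: "\<And>j. j \<le> i \<Longrightarrow> \<bar>B' j - B j\<bar> \<le> chernoff_radius (B j) (v\<^sup>2)"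
    and loss: "\<And>r. r \<le> i \<Longrightarrow> scdl_left m r A B \<le> S"
  shows "\<bar>scdl_left m i A' B' - scdl_left m i A B\<bar>
           \<le> 336 * (v + harm m * v * sqrt (real m * S) + real m * harm m * v\<^sup>2)"
proof -
  define c where "c = real (i + 1) / real m"
  define D where "D j = \<bar>max (A' j - c * B' j) 0 - max (A j - c * B j) 0\<bar>" for j
  let ?N = "near_bins m i A B"
  have "scdl_left m i A' B' - scdl_left m i A B
      = (\<Sum>j\<in>{0..i}. max (A' j - c * B' j) 0 - max (A j - c * B j) 0)"
    by (simp add: scdl_left_def c_def sum_subtractf)
  then have "\<bar>scdl_left m i A' B' - scdl_left m i A B\<bar> \<le> (\<Sum>j\<in>{0..i}. D j)"
    by (simp add: D_def sum_abs)
  also have "\<dots> = D i + (\<Sum>j<i. D j)"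
    by (simp add: atLeast0AtMost lessThan_Suc_atMost[symmetric])
  also have "\<dots> \<le> (8 * v + 8 * v\<^sup>2) + (\<Sum>j<i. 320 * real m * v\<^sup>2 / real (i - j) + 8 * v\<^sup>2
                     + (if j \<in> ?N then 8 * v * sqrt (B j) else 0))"
  proof (rule add_mono)
    have c: "0 \<le> c" "c \<le> 2" using m by (auto simp: c_def field_simps)
    have "v * sqrt (B i) \<le> v * 1" using B[of i] v by (intro mult_left_mono) auto
    then show "D i \<le> 8 * v + 8 * v\<^sup>2"
      using left_term_perturb_le[OF c v dA[of i] dB[of i]] by (simp add: D_def)
    show "(\<Sum>j<i. D j) \<le> (\<Sum>j<i. 320 * real m * v\<^sup>2 / real (i - j) + 8 * v\<^sup>2
                     + (if j \<in> ?N then 8 * v * sqrt (B j) else 0))"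
      unfolding D_def c_def using B dA dB
      by (intro sum_mono scdl_left_bin_perturb[OF m _ v]) auto
  qed
  also have "\<dots> = 8 * v + 8 * v\<^sup>2 + 320 * real m * v\<^sup>2 * harm i + 8 * real i * v\<^sup>2
                  + 8 * v * (\<Sum>j\<in>?N. sqrt (B j))"
  proof -
    have "{j \<in> {..<i}. j \<in> ?N} = ?N" using near_bins_subset[of m i A B] by auto
    then have "(\<Sum>j<i. if j \<in> ?N then 8 * v * sqrt (B j) else 0) = (\<Sum>j\<in>?N. 8 * v * sqrt (B j))"
      using sum.inter_filter[of "{..<i}" "\<lambda>j. 8 * v * sqrt (B j)" "\<lambda>j. j \<in> ?N"] by simp
    then show ?thesis
      by (simp add: sum.distrib sum_distrib_left sum_inverse_distance_eq_harm[symmetric] algebra_simps)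
  qed
  also have "\<dots> \<le> 336 * (v + harm m * v * sqrt (real m * S) + real m * harm m * v\<^sup>2)"
    using loss[of 0] scdl_left_nonneg[of m 0 A B] B
    by (intro left_perturb_total_le[OF m v] near_bins_sqrt_mass_le[OF m _ loss]) auto
  finally show ?thesis .
qed

text \<open>The reflection \<open>p \<mapsto> 1 - p\<close>, \<open>y \<mapsto> 1 - y\<close> turns the right part of the loss into a left part.\<close>

lemma scdl_right_eq_scdl_left_reflect:
  assumes "i < m"
  shows "scdl_right m i A B = scdl_left m (m - 1 - i) (\<lambda>j. B (m - j) - A (m - j)) (\<lambda>j. B (m - j))"
proof -
  have "scdl_left m (m - 1 - i) (\<lambda>j. B (m - j) - A (m - j)) (\<lambda>j. B (m - j))
      = (\<Sum>j\<in>{0..m - 1 - i}. max (real i / real m * B (m - j) - A (m - j)) 0)"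
  proof (unfold scdl_left_def, intro sum.cong refl arg_cong2[where f = max])
    fix j
    have c: "real (m - 1 - i + 1) / real m = 1 - real i / real m"
      using assms by (simp add: of_nat_diff diff_divide_distrib)
    show "B (m - j) - A (m - j) - real (m - 1 - i + 1) / real m * B (m - j)
        = real i / real m * B (m - j) - A (m - j)"
      unfolding c by (simp add: algebra_simps)
  qed
  also have "\<dots> = scdl_right m i A B"
    unfolding scdl_right_def
    by (rule sum.reindex_bij_witness[of _ "\<lambda>j. m - j" "\<lambda>j. m - j"]) (use assms in auto)
  finally show ?thesis by simp
qed

lemma scdl_right_perturb:
  assumes m: "1 \<le> m" "i < m" and v: "0 \<le> v"
    and B: "\<And>j. j \<le> m \<Longrightarrow> 0 \<le> B j \<and> B j \<le> 1"
    and dA: "\<And>j. j \<le> m \<Longrightarrow> \<bar>A' j - A j\<bar> \<le> chernoff_radius (B j) (v\<^sup>2)"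
    and dB: "\<And>j. j \<le> m \<Longrightarrow> \<bar>B' j - B j\<bar> \<le> chernoff_radius (B j) (v\<^sup>2)"
    and loss: "\<And>r. r < m \<Longrightarrow> scdl_right m r A B \<le> S"
  shows "\<bar>scdl_right m i A' B' - scdl_right m i A B\<bar>
           \<le> 336 * (v + harm m * v * sqrt (real m * S) + real m * harm m * v\<^sup>2)"
proof -
  have "\<bar>scdl_left m (m - 1 - i) (\<lambda>j. B' (m - j) - A' (m - j)) (\<lambda>j. B' (m - j))
        - scdl_left m (m - 1 - i) (\<lambda>j. B (m - j) - A (m - j)) (\<lambda>j. B (m - j))\<bar>
      \<le> 336 * (v + harm m * v * sqrt (real m * S) + real m * harm m * v\<^sup>2)"
  proof (rule scdl_left_perturb[OF m(1) _ v])
    fix j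
    have j: "m - j \<le> m" by simp
    show "0 \<le> B (m - j) \<and> B (m - j) \<le> 1" by (rule B[OF j])
    show "\<bar>B' (m - j) - B (m - j)\<bar> \<le> chernoff_radius (B (m - j)) (v\<^sup>2)" by (rule dB[OF j])
    from dA[OF j] dB[OF j]
    show "\<bar>(B' (m - j) - A' (m - j)) - (B (m - j) - A (m - j))\<bar> \<le> 2 * chernoff_radius (B (m - j)) (v\<^sup>2)"
      by linarith
  next
    fix r assume "r \<le> m - 1 - i"
    then have "scdl_left m r (\<lambda>j. B (m - j) - A (m - j)) (\<lambda>j. B (m - j)) = scdl_right m (m - 1 - r) A B"
      using scdl_right_eq_scdl_left_reflect[of "m - 1 - r" m A B] m by simp
    also have "\<dots> \<le> S" using m by (intro loss) simp
    finally show "scdl_left m r (\<lambda>j. B (m - j) - A (m - j)) (\<lambda>j. B (m - j)) \<le> S" .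
  qed simp
  then show ?thesis using scdl_right_eq_scdl_left_reflect[OF m(2)] by simp
qed

lemma scdl_at_perturb:
  assumes m: "1 \<le> m" "i \<le> m" and v: "0 \<le> v"
    and B: "\<And>j. j \<le> m \<Longrightarrow> 0 \<le> B j \<and> B j \<le> 1"
    and dA: "\<And>j. j \<le> m \<Longrightarrow> \<bar>A' j - A j\<bar> \<le> chernoff_radius (B j) (v\<^sup>2)"
    and dB: "\<And>j. j \<le> m \<Longrightarrow> \<bar>B' j - B j\<bar> \<le> chernoff_radius (B j) (v\<^sup>2)"
    and loss: "\<And>r. r \<le> m \<Longrightarrow> scdl_at m r A B \<le> S"
  shows "\<bar>scdl_at m i A' B' - scdl_at m i A B\<bar>
           \<le> 672 * (v + harm m * v * sqrt (real m * S) + real m * harm m * v\<^sup>2)"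
proof -
  let ?K = "336 * (v + harm m * v * sqrt (real m * S) + real m * harm m * v\<^sup>2)"
  have left_loss: "scdl_left m r A B \<le> S" and right_loss: "scdl_right m r A B \<le> S" if "r \<le> m" for r
    using loss[OF that] scdl_left_nonneg[of m r A B] scdl_right_nonneg[of m r A B]
    by (simp_all add: scdl_at_def)
  have left: "\<bar>scdl_left m i A' B' - scdl_left m i A B\<bar> \<le> ?K"
  proof (rule scdl_left_perturb[OF m v])
    fix j assume "j \<le> i"
    then have j: "j \<le> m" using m by simp
    have "0 \<le> chernoff_radius (B j) (v\<^sup>2)" using B[OF j] by (simp add: chernoff_radius_nonneg)
    then show "\<bar>A' j - A j\<bar> \<le> 2 * chernoff_radius (B j) (v\<^sup>2)" using dA[OF j] by linarith
    show "0 \<le> B j \<and> B j \<le> 1" by (rule B[OF j])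
    show "\<bar>B' j - B j\<bar> \<le> chernoff_radius (B j) (v\<^sup>2)" by (rule dB[OF j])
  qed (use m left_loss in simp)
  have right: "\<bar>scdl_right m i A' B' - scdl_right m i A B\<bar> \<le> ?K"
  proof (cases "i = m")
    case True
    have "0 \<le> S" using right_loss[of 0] scdl_right_nonneg[of m 0 A B] by simp
    then have "0 \<le> ?K"
      using v harm_nonneg[of m] by (intro mult_nonneg_nonneg add_nonneg_nonneg real_sqrt_ge_zero) auto
    then show ?thesis using True by (simp add: scdl_right_def)
  next
    case False
    then show ?thesis
      using m right_loss by (intro scdl_right_perturb[OF m(1) _ v B dA dB]) auto
  qed
  show ?thesis using left right unfolding scdl_at_def by linarith
qed

lemma abs_Max_image_diff_le:
  fixes f g :: "'a \<Rightarrow> real"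
  assumes "finite I" "I \<noteq> {}" "\<And>i. i \<in> I \<Longrightarrow> \<bar>f i - g i\<bar> \<le> D"
  shows "\<bar>Max (f ` I) - Max (g ` I)\<bar> \<le> D"
proof -
  have "Max (f ` I) \<in> f ` I" "Max (g ` I) \<in> g ` I"
    using assms by (auto intro: Max_in)
  then obtain a b where a: "a \<in> I" "Max (f ` I) = f a" and b: "b \<in> I" "Max (g ` I) = g b"
    by auto
  have "g a \<le> g b" "f b \<le> f a"
    using a b assms Max_ge[of "g ` I" "g a"] Max_ge[of "f ` I" "f b"] by auto
  then show ?thesis using assms(3)[OF a(1)] assms(3)[OF b(1)] a b by linarith
qed

lemma SCDL_perturb:
  fixes x p y :: "nat \<Rightarrow> real"
  assumes T: "0 < T" and m: "1 \<le> m" and L: "0 \<le> L" and y: "\<forall>t<T. y t \<in> {0,1}"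
    and dev: "\<And>w j. w \<in> {y, \<lambda>_. 1} \<Longrightarrow> j \<le> m \<Longrightarrow>
      \<bar>bin_mass m T w x j - bin_mass m T w p j\<bar> \<le> chernoff_radius (bin_mass m T w p j) L"
  shows "\<bar>SCDL m T x y - SCDL m T p y\<bar>
           \<le> 672 * (sqrt (L / real T) + harm m * sqrt (L / real T) * sqrt (real m * SCDL m T p y)
                    + real m * harm m * (L / real T))"
proof -
  define v where "v = sqrt (L / real T)"
  have v: "0 \<le> v" "v\<^sup>2 = L / real T" using L T by (simp_all add: v_def)
  have dev_scaled: "\<bar>bin_mass m T w x j / real T - bin_mass m T w p j / real T\<bar>
                      \<le> chernoff_radius (piw m T p j) (v\<^sup>2)"
    if w: "w \<in> {y, \<lambda>_. 1}" and j: "j \<le> m" for w j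
  proof -
    have "\<forall>t<T. w t \<in> {0,1}" using w y by auto
    then have "chernoff_radius (bin_mass m T w p j) L \<le> chernoff_radius (bin_mass m T (\<lambda>_. 1) p j) L"
      using L by (intro chernoff_radius_mono bin_mass_le_bin_mass_1)
    then have "\<bar>bin_mass m T w x j - bin_mass m T w p j\<bar> \<le> chernoff_radius (bin_mass m T (\<lambda>_. 1) p j) L"
      using dev[OF w j] by linarith
    then have "\<bar>bin_mass m T w x j - bin_mass m T w p j\<bar> / real T
        \<le> chernoff_radius (bin_mass m T (\<lambda>_. 1) p j) L / real T"
      by (rule divide_right_mono) simp
    then show ?thesis
      using T by (simp add: v piw_eq_bin_mass chernoff_radius_divide diff_divide_distrib[symmetric])
  qed
  let ?K = "672 * (v + harm m * v * sqrt (real m * SCDL m T p y) + real m * harm m * v\<^sup>2)"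
  have "\<bar>Max ((\<lambda>i. scdl_at m i (piyw m T x y) (piw m T x)) ` {0..m})
         - Max ((\<lambda>i. scdl_at m i (piyw m T p y) (piw m T p)) ` {0..m})\<bar> \<le> ?K"
  proof (rule abs_Max_image_diff_le)
    fix i assume "i \<in> {0..m}"
    then show "\<bar>scdl_at m i (piyw m T x y) (piw m T x) - scdl_at m i (piyw m T p y) (piw m T p)\<bar> \<le> ?K"
    proof (intro scdl_at_perturb[OF m _ v(1)])
      fix j assume j: "j \<le> m"
      show "0 \<le> piw m T p j \<and> piw m T p j \<le> 1" by (simp add: piw_nonneg piw_le_1)
      show "\<bar>piyw m T x y j - piyw m T p y j\<bar> \<le> chernoff_radius (piw m T p j) (v\<^sup>2)"
        using dev_scaled[of y j] j by (simp add: piyw_def)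
      show "\<bar>piw m T x j - piw m T p j\<bar> \<le> chernoff_radius (piw m T p j) (v\<^sup>2)"
        using dev_scaled[of "\<lambda>_. 1" j] j by (simp add: piw_eq_bin_mass)
    next
      fix r assume "r \<le> m"
      then show "scdl_at m r (piyw m T p y) (piw m T p) \<le> SCDL m T p y"
        by (rule scdl_at_le_SCDL[OF y])
    qed auto
  qed auto
  then show ?thesis
    unfolding SCDL_eq_Max_scdl_at[OF y, symmetric] v(2) unfolding v_def .
qed

lemma perturb_bound_le_rate:
  fixes m T :: nat and l S :: real
  assumes m: "2 \<le> m" and T: "0 < T" and l: "0 < l" and S: "0 \<le> S"
  shows "672 * (sqrt (3 * l / real T) + harm m * sqrt (3 * l / real T) * sqrt (real m * S)
                + real m * harm m * (3 * l / real T))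
         \<le> 6048 * (sqrt (l / real T) + ln (real m) * sqrt (real m * S * l / real T)
                + real m * ln (real m) * l / real T)"
proof -
  define w where "w = sqrt (l / real T)"
  define X where "X = sqrt (real m * S)"
  define lm where "lm = ln (real m)"
  have w: "0 \<le> w" and X: "0 \<le> X" and lm: "0 \<le> lm"
    using l T S m by (simp_all add: w_def X_def lm_def)
  have H: "harm m \<le> 3 * lm" using harm_le_3_ln[OF m] by (simp add: lm_def)
  have "sqrt 3 \<le> (2::real)" by (rule real_le_lsqrt) auto
  moreover have "sqrt (3 * l / real T) = sqrt 3 * w"
    unfolding w_def by (simp add: real_sqrt_mult[symmetric])
  ultimately have v: "sqrt (3 * l / real T) \<le> 2 * w"
    using w by (simp add: mult_right_mono)
  have "harm m * sqrt (3 * l / real T) * X \<le> (3 * lm) * (2 * w) * X"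
    using H v harm_nonneg[of m] X lm l T by (intro mult_right_mono mult_mono) auto
  also have "\<dots> = 6 * (lm * (X * w))" by simp
  finally have P: "harm m * sqrt (3 * l / real T) * X \<le> 6 * (lm * (X * w))" .
  have "real m * harm m * (3 * l / real T) \<le> real m * (3 * lm) * (3 * l / real T)"
    using H l T by (intro mult_right_mono mult_left_mono) auto
  also have "\<dots> = 9 * (real m * lm * l / real T)" by simp
  finally have Q: "real m * harm m * (3 * l / real T) \<le> 9 * (real m * lm * l / real T)" .
  have XW: "sqrt (real m * S * l / real T) = X * w"
    unfolding X_def w_def by (simp add: real_sqrt_mult[symmetric])
  have "0 \<le> lm * (X * w)" using lm X w by simp
  then show ?thesis
    using v P Q w unfolding XW w_def[symmetric] X_def[symmetric] lm_def[symmetric] distrib_left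
    by linarith
qed

lemma SCDL_perturb_le_rate:
  fixes x p y :: "nat \<Rightarrow> real"
  assumes T: "0 < T" and m: "2 \<le> m" and l: "0 < l" and y: "\<forall>t<T. y t \<in> {0,1}"
    and dev: "\<And>w j. w \<in> {y, \<lambda>_. 1} \<Longrightarrow> j \<le> m \<Longrightarrow>
      \<bar>bin_mass m T w x j - bin_mass m T w p j\<bar> \<le> chernoff_radius (bin_mass m T w p j) (3 * l)"
  shows "\<bar>SCDL m T x y - SCDL m T p y\<bar>
           \<le> 6048 * (sqrt (l / real T) + ln (real m) * sqrt (real m * SCDL m T p y * l / real T)
                     + real m * ln (real m) * l / real T)"
proof -
  have "\<bar>SCDL m T x y - SCDL m T p y\<bar>
      \<le> 672 * (sqrt (3 * l / real T) + harm m * sqrt (3 * l / real T) * sqrt (real m * SCDL m T p y)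
               + real m * harm m * (3 * l / real T))"
    using l m by (intro SCDL_perturb[OF T _ _ y dev]) simp_all
  also have "\<dots> \<le> 6048 * (sqrt (l / real T) + ln (real m) * sqrt (real m * SCDL m T p y * l / real T)
                          + real m * ln (real m) * l / real T)"
    by (rule perturb_bound_le_rate[OF m T l SCDL_nonneg[OF y]])
  finally show ?thesis .
qed

section \<open>Concentration of the rounded loss\<close>

lemma prob_bin_mass_deviation:
  assumes m: "0 < m" and p: "\<And>t. t < T \<Longrightarrow> p t \<in> {0..1}" and w: "\<forall>t<T. w t \<in> {0,1}"
    and L: "0 < L" and j: "j \<le> m"
  shows "measure_pmf.prob (Pi_pmf {..<T} d (\<lambda>t. tau m (p t)))
           {x. chernoff_radius (bin_mass m T w p j) L \<le> \<bar>bin_mass m T w x j - bin_mass m T w p j\<bar>}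
         \<le> 2 * exp (- L)"
  unfolding bin_mass_def
proof (rule prob_Pi_pmf_Bernoulli_sum_deviation[OF finite_set_pmf_tau[OF p] _ _ L])
  show "w t * wt m j x = 0 \<or> w t * wt m j x = 1" if "t < T" "x \<in> set_pmf (tau m (p t))" for t x
    using wt_tau_cases[OF m p that(2), of j] w that(1) by auto
  show "(\<Sum>t<T. w t * wt m j (p t))
      = (\<Sum>t<T. measure_pmf.expectation (tau m (p t)) (\<lambda>x. w t * wt m j x))"
    using expectation_tau_wt[OF p m j] by simp
qed

lemma prob_some_bin_mass_deviates:
  assumes m: "0 < m" and p: "\<And>t. t < T \<Longrightarrow> p t \<in> {0..1}" and y: "\<forall>t<T. y t \<in> {0,1}" and L: "0 < L"
  shows "measure_pmf.prob (Pi_pmf {..<T} d (\<lambda>t. tau m (p t)))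
           {x. \<exists>j\<le>m. \<exists>w\<in>{y, \<lambda>_. 1}.
                 chernoff_radius (bin_mass m T w p j) L \<le> \<bar>bin_mass m T w x j - bin_mass m T w p j\<bar>}
         \<le> 4 * (real m + 1) * exp (- L)"
proof -
  let ?M = "Pi_pmf {..<T} d (\<lambda>t. tau m (p t))"
  let ?E = "\<lambda>w j. {x. chernoff_radius (bin_mass m T w p j) L \<le> \<bar>bin_mass m T w x j - bin_mass m T w p j\<bar>}"
  have "{x. \<exists>j\<le>m. \<exists>w\<in>{y, \<lambda>_. 1}. x \<in> ?E w j} = (\<Union>j\<in>{..m}. ?E y j \<union> ?E (\<lambda>_. 1) j)"
    by auto
  then have "measure_pmf.prob ?M {x. \<exists>j\<le>m. \<exists>w\<in>{y, \<lambda>_. 1}. x \<in> ?E w j}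
      \<le> (\<Sum>j\<in>{..m}. measure_pmf.prob ?M (?E y j \<union> ?E (\<lambda>_. 1) j))"
    by (simp add: measure_pmf.finite_measure_subadditive_finite)
  also have "\<dots> \<le> (\<Sum>j\<in>{..m}. 4 * exp (- L))"
  proof (rule sum_mono)
    fix j assume "j \<in> {..m}"
    then have E: "measure_pmf.prob ?M (?E w j) \<le> 2 * exp (- L)" if "\<forall>t<T. w t \<in> {0,1}" for w
      using prob_bin_mass_deviation[OF m p that L] by simp
    have "measure_pmf.prob ?M (?E y j \<union> ?E (\<lambda>_. 1) j)
        \<le> measure_pmf.prob ?M (?E y j) + measure_pmf.prob ?M (?E (\<lambda>_. 1) j)"
      by (rule measure_Un_le) auto
    also have "\<dots> \<le> 2 * exp (- L) + 2 * exp (- L)"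
      using E[OF y] E[of "\<lambda>_. 1"] by (intro add_mono) auto
    finally show "measure_pmf.prob ?M (?E y j \<union> ?E (\<lambda>_. 1) j) \<le> 4 * exp (- L)"
      by simp
  qed
  finally show ?thesis by (simp add: algebra_simps)
qed

lemma union_bound_small:
  fixes \<delta> :: real
  assumes m: "2 \<le> m" and \<delta>: "0 < \<delta>" "2 * real m * \<delta> < 1"
  shows "4 * (real m + 1) * \<delta> ^ 3 \<le> \<delta>"
proof -
  have "2 \<le> real m" using m by simp
  moreover from this have "2 * real m \<le> real m * real m" by (intro mult_right_mono) auto
  ultimately have "real m + 1 \<le> (real m)\<^sup>2" unfolding power2_eq_square by linarith
  then have "4 * (real m + 1) * \<delta>\<^sup>2 \<le> (2 * real m * \<delta>)\<^sup>2"
    by (simp add: power_mult_distrib mult_right_mono)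
  also have "\<dots> \<le> 1"
    using \<delta> by (simp add: power_le_one)
  finally have "4 * (real m + 1) * \<delta>\<^sup>2 * \<delta> \<le> 1 * \<delta>"
    using \<delta>(1) by (intro mult_right_mono) auto
  then show ?thesis by (simp add: power2_eq_square power3_eq_cube algebra_simps)
qed

lemma prob_some_bin_mass_deviates_le:
  assumes m: "2 \<le> m" and p: "\<And>t. t < T \<Longrightarrow> p t \<in> {0..1}" and y: "\<forall>t<T. y t \<in> {0,1}"
    and \<delta>: "0 < \<delta>" "2 * real m * \<delta> < 1"
  shows "measure_pmf.prob (Pi_pmf {..<T} d (\<lambda>t. tau m (p t)))
           {x. \<exists>j\<le>m. \<exists>w\<in>{y, \<lambda>_. 1}. chernoff_radius (bin_mass m T w p j) (3 * ln (1 / \<delta>))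
                                      \<le> \<bar>bin_mass m T w x j - bin_mass m T w p j\<bar>}
         \<le> \<delta>"
proof -
  have "2 * 1 * \<delta> \<le> 2 * real m * \<delta>" using m \<delta>(1) by (intro mult_right_mono) auto
  then have "\<delta> < 1" using \<delta> by linarith
  then have "0 < 3 * ln (1 / \<delta>)" using \<delta> by simp
  moreover have "exp (- (3 * ln (1 / \<delta>))) = \<delta> ^ 3"
  proof -
    have "- (3 * ln (1 / \<delta>)) = real 3 * ln \<delta>" using \<delta>(1) by (simp add: ln_div)
    then have "exp (- (3 * ln (1 / \<delta>))) = exp (ln \<delta>) ^ 3" by (simp only: exp_of_nat_mult)
    then show ?thesis using \<delta>(1) by simp
  qed
  ultimately have "measure_pmf.prob (Pi_pmf {..<T} d (\<lambda>t. tau m (p t)))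
           {x. \<exists>j\<le>m. \<exists>w\<in>{y, \<lambda>_. 1}. chernoff_radius (bin_mass m T w p j) (3 * ln (1 / \<delta>))
                                      \<le> \<bar>bin_mass m T w x j - bin_mass m T w p j\<bar>}
         \<le> 4 * (real m + 1) * \<delta> ^ 3"
    using prob_some_bin_mass_deviates[OF _ p y, where L = "3 * ln (1 / \<delta>)"] m by simp
  also have "\<dots> \<le> \<delta>" by (rule union_bound_small[OF m \<delta>])
  finally show ?thesis .
qed

theorem SCDL_rounding_concentration:
  fixes T m :: nat and p y :: "nat \<Rightarrow> real" and \<delta> :: real
  assumes T: "0 < T" and p: "\<And>t. t < T \<Longrightarrow> p t \<in> {0..1}" and y: "\<forall>t<T. y t \<in> {0,1}"
    and m: "0 < m" and \<delta>: "0 < \<delta>" "\<delta> < 1 / (2 * real m)"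
  shows "1 - \<delta> \<le> measure_pmf.prob (Pi_pmf {..<T} 0 (\<lambda>t. tau m (p t)))
          {p'. \<bar>SCDL m T p' y - SCDL m T p y\<bar> \<le>
               6048 * (sqrt (ln (1/\<delta>) / real T)
                       + ln (real m) * sqrt (real m * SCDL m T p y * ln (1/\<delta>) / real T)
                       + real m * ln (real m) * ln (1/\<delta>) / real T)}"
    (is "_ \<le> measure_pmf.prob ?M ?G")
proof -
  have m\<delta>: "2 * real m * \<delta> < 1" using \<delta> m by (simp add: field_simps)
  have "2 * 1 * \<delta> \<le> 2 * real m * \<delta>" using m \<delta>(1) by (intro mult_right_mono) auto
  then have "\<delta> < 1" using m\<delta> by linarith
  then have l: "0 < ln (1 / \<delta>)" using \<delta>(1) by simp
  consider "m = 1" | "2 \<le> m" using m by linarith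
  then show ?thesis
  proof cases
    case 1
    have "SCDL m T x y = 0" for x using SCDL_1_eq_0[OF y] 1 by simp
    moreover have "0 \<le> sqrt (ln (1 / \<delta>) / real T)" using l by simp
    ultimately have "?G = UNIV" using 1 by auto
    then show ?thesis using \<delta> by simp
  next
    case 2
    let ?bad = "{x. \<exists>j\<le>m. \<exists>w\<in>{y, \<lambda>_. 1}. chernoff_radius (bin_mass m T w p j) (3 * ln (1 / \<delta>))
                                              \<le> \<bar>bin_mass m T w x j - bin_mass m T w p j\<bar>}"
    have "UNIV - ?bad \<subseteq> ?G"
    proof
      fix x assume good: "x \<in> UNIV - ?bad"
      have dev: "\<bar>bin_mass m T w x j - bin_mass m T w p j\<bar> \<le> chernoff_radius (bin_mass m T w p j) (3 * ln (1 / \<delta>))"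
        if "w \<in> {y, \<lambda>_. 1}" "j \<le> m" for w j
      proof -
        have "\<not> chernoff_radius (bin_mass m T w p j) (3 * ln (1 / \<delta>)) \<le> \<bar>bin_mass m T w x j - bin_mass m T w p j\<bar>"
          using good that by blast
        then show ?thesis by simp
      qed
      show "x \<in> ?G" using SCDL_perturb_le_rate[OF T 2 l y dev] by simp
    qed
    then have "measure_pmf.prob ?M (UNIV - ?bad) \<le> measure_pmf.prob ?M ?G"
      by (intro measure_pmf.finite_measure_mono) simp_all
    moreover have "measure_pmf.prob ?M ?bad \<le> \<delta>"
      by (rule prob_some_bin_mass_deviates_le[OF 2 p y \<delta>(1) m\<delta>])
    ultimately show ?thesis using measure_pmf.prob_compl[of ?bad ?M] by simp
  qed
qed

theorem lemma7p4:
  shows "\<exists>C>0. \<forall>(T::nat) (p::nat \<Rightarrow> real) (y::nat \<Rightarrow> real) (m::nat) (\<delta>::real).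
    T > 0 \<and> (\<forall>t<T. p t \<in> {0..1} \<and> y t \<in> {0,1}) \<and> m > 0 \<and> 0 < \<delta> \<and> \<delta> < 1 / (2 * real m)
    \<longrightarrow> measure_pmf.prob (Pi_pmf {..<T} 0 (\<lambda>t. tau m (p t)))
          {p'. \<bar>SCDL m T p' y - SCDL m T p y\<bar> \<le>
               C * (sqrt (ln (1/\<delta>) / real T)
                    + ln (real m) * sqrt (real m * SCDL m T p y * ln (1/\<delta>) / real T)
                    + real m * ln (real m) * ln (1/\<delta>) / real T)}
        \<ge> 1 - \<delta>"
proof (intro exI[of _ 6048] conjI allI impI)
  fix T m :: nat and p y :: "nat \<Rightarrow> real" and \<delta> :: real
  assume "T > 0 \<and> (\<forall>t<T. p t \<in> {0..1} \<and> y t \<in> {0,1}) \<and> m > 0 \<and> 0 < \<delta> \<and> \<delta> < 1 / (2 * real m)"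
  then show "measure_pmf.prob (Pi_pmf {..<T} 0 (\<lambda>t. tau m (p t)))
          {p'. \<bar>SCDL m T p' y - SCDL m T p y\<bar> \<le>
               6048 * (sqrt (ln (1/\<delta>) / real T)
                       + ln (real m) * sqrt (real m * SCDL m T p y * ln (1/\<delta>) / real T)
                       + real m * ln (real m) * ln (1/\<delta>) / real T)}
        \<ge> 1 - \<delta>"
    by (intro SCDL_rounding_concentration) auto
qed simp

end
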